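(* Let $G$ be a graph with $m\ge1$ edges, let $k\ge 0$ and $0\le p\le m$ be integers, $\ell=m-p$, $\eta\ge1$, and $E=E(G,\eta)$ as in the context. If $G$ has a set $U\subseteq V(G)$ with $|U|\le k$ incident to at least $p$ edges, then there is a decision tree $T$ with $|T|=dep(T)\le k$ and $|O(T,E)|\le\ell\eta$.
   Context: Fix an ordering $e_1,\dots,e_m$ of $E(G)$. For a positive integer $\eta$, $E(G,\eta)$ has features $V(G)\cup\{d_0\}$ and, for each $r\in[\eta]$ and $i\in[m]$: a negative example with $d_0=2m(r-1)+2i-1$ and, for each $v\in V(G)$, value $1$ if $v$ is an endpoint of $e_i$ and $0$ otherwise; and a positive example with $d_0=2m(r-1)+2i$ and value $0$ on every vertex feature. A decision tree (DT) is a rooted tree whose test nodes $v$ carry a feature $f(v)$ and integer threshold $\lambda(v)$ (examples with $e(f(v))\le\lambda(v)$ go left, others right) and whose leaves are labeled positive or negative. $|T|$ = number of test nodes; $dep(T)$ = maximum number of test nodes on a root-to-leaf path. An example is an outlier for $T$ if it reaches a leaf with the opposite label; $O(T,E)$ is the set of outliers. *)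

theory Defs
  imports Main
begin

text \<open>A simple graph on a finite vertex set V, with edges given as a list
  es = [e_1,...,e_m] (the fixed ordering of E(G)); each edge is a 2-element
  subset of V and edges are pairwise distinct.\<close>
definition simple_graph :: "'v set \<Rightarrow> 'v set list \<Rightarrow> bool" where
  "simple_graph V es \<longleftrightarrow> finite V \<and> distinct es \<and>
     (\<forall>e\<in>set es. e \<subseteq> V \<and> card e = 2)"

text \<open>Features: Some v for a vertex feature v, None for the special feature d_0.
  An example is a pair (feature assignment, label); label True = positive.\<close>
type_synonym 'v example = "('v option \<Rightarrow> int) \<times> bool"

definition neg_ex :: "'v set list \<Rightarrow> nat \<Rightarrow> nat \<Rightarrow> 'v example" where
  "neg_ex es r i =
     ((\<lambda>f. case f of None \<Rightarrow> int (2 * length es * (r - 1) + 2 * i - 1)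
                   | Some v \<Rightarrow> (if v \<in> es ! (i - 1) then 1 else 0)), False)"

definition pos_ex :: "'v set list \<Rightarrow> nat \<Rightarrow> nat \<Rightarrow> 'v example" where
  "pos_ex es r i =
     ((\<lambda>f. case f of None \<Rightarrow> int (2 * length es * (r - 1) + 2 * i)
                   | Some v \<Rightarrow> 0), True)"

definition dataset :: "'v set list \<Rightarrow> nat \<Rightarrow> 'v example set" where
  "dataset es \<eta> =
     {neg_ex es r i | r i. r \<in> {1..\<eta>} \<and> i \<in> {1..length es}} \<union>
     {pos_ex es r i | r i. r \<in> {1..\<eta>} \<and> i \<in> {1..length es}}"

datatype 'f dtree = Leaf bool | Node 'f int "'f dtree" "'f dtree"

fun classify :: "'f dtree \<Rightarrow> ('f \<Rightarrow> int) \<Rightarrow> bool" where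
  "classify (Leaf b) x = b"
| "classify (Node f t l r) x = (if x f \<le> t then classify l x else classify r x)"

fun tsize :: "'f dtree \<Rightarrow> nat" where
  "tsize (Leaf b) = 0"
| "tsize (Node f t l r) = Suc (tsize l + tsize r)"

fun tdepth :: "'f dtree \<Rightarrow> nat" where
  "tdepth (Leaf b) = 0"
| "tdepth (Node f t l r) = Suc (max (tdepth l) (tdepth r))"

fun tfeatures :: "'f dtree \<Rightarrow> 'f set" where
  "tfeatures (Leaf b) = {}"
| "tfeatures (Node f t l r) = insert f (tfeatures l \<union> tfeatures r)"

definition outliers :: "'f dtree \<Rightarrow> (('f \<Rightarrow> int) \<times> bool) set \<Rightarrow> (('f \<Rightarrow> int) \<times> bool) set" where
  "outliers T E = {e \<in> E. classify T (fst e) \<noteq> snd e}"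

end

theory Submission
  imports Defs
begin

text \<open>Test every vertex of a cover U \<subseteq> V(G) of at least p edges in turn, sending an
  example to a negative leaf as soon as one of these features is positive. Positive
  examples vanish on all vertex features and so end in the positive leaf, and so does a
  negative example exactly when its edge misses U. Hence the only outliers are the
  negative examples of the at most \<ell> = m - p uncovered edges, \<ell> in each of the
  \<eta> rounds, and the tree is a path with |U| \<le> k test nodes.\<close>

fun test_chain :: "'f list \<Rightarrow> 'f dtree" where
  "test_chain [] = Leaf True"
| "test_chain (f # fs) = Node f 0 (test_chain fs) (Leaf False)"

lemma classify_test_chain: "classify (test_chain fs) x \<longleftrightarrow> (\<forall>f\<in>set fs. x f \<le> 0)"
  by (induction fs) auto

lemma tsize_test_chain: "tsize (test_chain fs) = length fs"
  by (induction fs) auto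

lemma tdepth_test_chain: "tdepth (test_chain fs) = length fs"
  by (induction fs) auto

lemma tfeatures_test_chain: "tfeatures (test_chain fs) = set fs"
  by (induction fs) auto

lemma card_lessThan_filter_add_filter_not:
  "card {i. i < n \<and> P i} + card {i. i < n \<and> \<not> P i} = n"
proof -
  have "{..<n} = {i. i < n \<and> P i} \<union> {i. i < n \<and> \<not> P i}" by auto
  then have "n = card ({i. i < n \<and> P i} \<union> {i. i < n \<and> \<not> P i})"
    by (metis card_lessThan)
  also have "\<dots> = card {i. i < n \<and> P i} + card {i. i < n \<and> \<not> P i}"
    by (rule card_Un_disjoint) auto
  finally show ?thesis by simp
qed

lemma outliers_test_chain_dataset:
  "outliers (test_chain (map Some vs)) (dataset es \<eta>) \<subseteq>
     (\<lambda>(r, i). neg_ex es r (Suc i)) ` ({1..\<eta>} \<times> {i. i < length es \<and> es ! i \<inter> set vs = {}})"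
    (is "_ \<subseteq> ?neg ` ({1..\<eta>} \<times> ?uncovered)")
proof
  fix e
  assume "e \<in> outliers (test_chain (map Some vs)) (dataset es \<eta>)"
  then have e: "e \<in> dataset es \<eta>" and wrong: "(\<forall>v\<in>set vs. fst e (Some v) \<le> 0) \<noteq> snd e"
    by (auto simp: outliers_def classify_test_chain)
  from e obtain r i where r: "r \<in> {1..\<eta>}" and i: "i \<in> {1..length es}"
    and "e = neg_ex es r i \<or> e = pos_ex es r i"
    unfolding dataset_def by blast
  moreover have "e \<noteq> pos_ex es r i"
    using wrong by (auto simp: pos_ex_def)
  ultimately have "e = ?neg (r, i - 1)" and "es ! (i - 1) \<inter> set vs = {}"
    using wrong i by (auto simp: neg_ex_def split: if_splits)
  with r i show "e \<in> ?neg ` ({1..\<eta>} \<times> ?uncovered)"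
    by (intro rev_image_eqI[of "(r, i - 1)"]) auto
qed

lemma card_outliers_test_chain_dataset:
  "card (outliers (test_chain (map Some vs)) (dataset es \<eta>)) \<le>
     \<eta> * card {i. i < length es \<and> es ! i \<inter> set vs = {}}"
proof -
  let ?uncovered = "{i. i < length es \<and> es ! i \<inter> set vs = {}}"
  have "card (outliers (test_chain (map Some vs)) (dataset es \<eta>)) \<le>
          card ((\<lambda>(r, i). neg_ex es r (Suc i)) ` ({1..\<eta>} \<times> ?uncovered))"
    by (rule card_mono[OF _ outliers_test_chain_dataset]) simp
  also have "\<dots> \<le> card ({1..\<eta>} \<times> ?uncovered)"
    by (rule card_image_le) simp
  finally show ?thesis
    by (simp add: card_cartesian_product)
qed

theorem lemma1:
  fixes V :: "'v set" and es :: "'v set list" and k p \<eta> :: nat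
  assumes "simple_graph V es"
    and "length es \<ge> 1"
    and "p \<le> length es"
    and "\<eta> \<ge> 1"
    and "\<exists>U. U \<subseteq> V \<and> card U \<le> k \<and>
            card {i. i < length es \<and> es ! i \<inter> U \<noteq> {}} \<ge> p"
  shows "\<exists>T :: 'v option dtree.
           tfeatures T \<subseteq> insert None (Some ` V) \<and>
           tsize T = tdepth T \<and> tdepth T \<le> k \<and>
           card (outliers T (dataset es \<eta>)) \<le> (length es - p) * \<eta>"
proof -
  obtain U where "U \<subseteq> V" "card U \<le> k"
    and covered: "p \<le> card {i. i < length es \<and> es ! i \<inter> U \<noteq> {}}"
    using assms(5) by blast
  moreover have "finite U"
    using \<open>U \<subseteq> V\<close> assms(1) finite_subset unfolding simple_graph_def by blast
  ultimately obtain vs where "set vs = U" "length vs \<le> k"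
    by (metis finite_distinct_list distinct_card)
  let ?T = "test_chain (map Some vs)"
  have "card {i. i < length es \<and> es ! i \<inter> set vs = {}} \<le> length es - p"
    using covered \<open>set vs = U\<close>
      card_lessThan_filter_add_filter_not[of "length es" "\<lambda>i. es ! i \<inter> U \<noteq> {}"]
    by simp
  then have "card (outliers ?T (dataset es \<eta>)) \<le> \<eta> * (length es - p)"
    using card_outliers_test_chain_dataset[of vs es \<eta>] by (meson le_trans mult_le_mono2)
  then show ?thesis
    using \<open>set vs = U\<close> \<open>U \<subseteq> V\<close> \<open>length vs \<le> k\<close>
    by (intro exI[of _ ?T])
      (auto simp: tsize_test_chain tdepth_test_chain tfeatures_test_chain mult.commute)
qed

end
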